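(* Let $G$ be a finite simple graph of order $n$ having no connected component of order less than $3$, and let $\mathcal{G}$ be an arbitrary Abelian group of order at least $\Delta(G)+\mathrm{col}(G)+1$. Then there exists a labeling $f\colon E(G)\to\mathcal{G}$ with $f(e)\neq 0$ for all edges $e$, $w_f(v)\neq 0$ for all vertices $v$, and $w_f(u)\neq w_f(v)$ for every edge $uv$.
   Context: $w_f(v)=\sum_{u\in N(v)}f(uv)$ (sum in $\mathcal{G}$, identity $0$). $\Delta(G)$ is the maximum degree; the coloring number $\mathrm{col}(G)$ is the least $k$ such that every subgraph of $G$ has minimum degree less than $k$. *)

theory Defs
  imports Main
begin

definition simple_graph :: "'a set \<Rightarrow> 'a set set \<Rightarrow> bool" where
  "simple_graph V E \<longleftrightarrow> finite V \<and> (\<forall>e\<in>E. e \<subseteq> V \<and> card e = 2)"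

definition neighbours :: "'a set set \<Rightarrow> 'a \<Rightarrow> 'a set" where
  "neighbours E v = {u. {u, v} \<in> E}"

definition degree :: "'a set set \<Rightarrow> 'a \<Rightarrow> nat" where
  "degree E v = card (neighbours E v)"

definition adjacent :: "'a set set \<Rightarrow> 'a \<Rightarrow> 'a \<Rightarrow> bool" where
  "adjacent E u v \<longleftrightarrow> {u, v} \<in> E"

definition component :: "'a set \<Rightarrow> 'a set set \<Rightarrow> 'a \<Rightarrow> 'a set" where
  "component V E v = {u \<in> V. (adjacent E)\<^sup>*\<^sup>* v u}"

definition max_degree :: "'a set \<Rightarrow> 'a set set \<Rightarrow> nat" where
  "max_degree V E = Max (insert 0 (degree E ` V))"

definition subgraph :: "'a set \<Rightarrow> 'a set set \<Rightarrow> 'a set \<Rightarrow> 'a set set \<Rightarrow> bool" where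
  "subgraph V' E' V E \<longleftrightarrow> V' \<subseteq> V \<and> E' \<subseteq> E \<and> (\<forall>e\<in>E'. e \<subseteq> V')"

definition col :: "'a set \<Rightarrow> 'a set set \<Rightarrow> nat" where
  "col V E = (LEAST k. \<forall>V' E'. subgraph V' E' V E \<and> V' \<noteq> {} \<longrightarrow>
                          (\<exists>v\<in>V'. degree E' v < k))"

definition wdeg :: "'a set set \<Rightarrow> ('a set \<Rightarrow> 'g::comm_monoid_add) \<Rightarrow> 'a \<Rightarrow> 'g" where
  "wdeg E f v = (\<Sum>u\<in>neighbours E v. f {u, v})"

end

theory Submission
  imports Defs
begin

text \<open>
  Relabel one edge at a time, maintaining that all labels are nonzero and that on a growing
  vertex set \<open>D\<close> the weights are nonzero and distinct across edges. Relabelling an edge \<open>yv\<close>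
  with \<open>y, v \<notin> D\<close> moves only the weights of \<open>y\<close> and \<open>v\<close>, and to add \<open>v\<close> to \<open>D\<close> the new label
  must avoid 0 and at most \<open>deg v\<close> further values. Components are handled one at a time. In a
  component, take \<open>r\<close> of degree less than \<open>col G\<close>, a neighbour \<open>u\<close>, and a vertex \<open>z\<close> adjacent
  to \<open>r\<close> or \<open>u\<close> (this needs order \<open>\<ge> 3\<close>). The other vertices are added in order of
  decreasing distance from \<open>{r, u, z}\<close>, each through an edge to a nearer vertex, which is
  therefore not yet in \<open>D\<close>. Then \<open>z\<close> is added, also making \<open>w r \<noteq> w u\<close>. Finally \<open>r\<close> and \<open>u\<close>
  are added together through the edge \<open>ru\<close>. This shifts both weights by the same amount, and it
  must avoid at most \<open>deg r + deg u + 1 \<le> \<Delta> + col G\<close> values.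
\<close>

definition good_on :: "'a set set \<Rightarrow> ('a set \<Rightarrow> 'g::ab_group_add) \<Rightarrow> 'a set \<Rightarrow> bool" where
  "good_on E f D \<longleftrightarrow> (\<forall>e\<in>E. f e \<noteq> 0) \<and> (\<forall>v\<in>D. wdeg E f v \<noteq> 0) \<and>
     (\<forall>a\<in>D. \<forall>b\<in>D. {a, b} \<in> E \<longrightarrow> wdeg E f a \<noteq> wdeg E f b)"

text \<open>\<open>wdeg E f t - f e + x\<close> is the weight of \<open>t\<close> once the edge \<open>e \<ni> t\<close> is relabelled by \<open>x\<close>.\<close>
definition forbidden_labels ::
    "'a set set \<Rightarrow> ('a set \<Rightarrow> 'g::ab_group_add) \<Rightarrow> 'a set \<Rightarrow> 'a set \<Rightarrow> 'a \<Rightarrow> 'g set" where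
  "forbidden_labels E f D e t =
     {x. wdeg E f t - f e + x \<in> insert 0 (wdeg E f ` (neighbours E t \<inter> D))}"

lemma ex_not_in_finite:
  fixes B :: "'g set"
  assumes "finite B" "infinite (UNIV :: 'g set) \<or> card B < card (UNIV :: 'g set)"
  obtains x where "x \<notin> B"
  using assms by (metis UNIV_I card_mono finite_UNIV leD subsetI ex_new_if_finite)

lemma simple_graph_edgeD:
  assumes "simple_graph V E" "{a, b} \<in> E"
  shows "a \<in> V" "b \<in> V" "a \<noteq> b"
proof -
  have "{a, b} \<subseteq> V" "card {a, b} = 2" using assms unfolding simple_graph_def by auto
  then show "a \<in> V" "b \<in> V" "a \<noteq> b" by (auto simp: card_insert_if split: if_splits)
qed

lemma finite_neighbours: "simple_graph V E \<Longrightarrow> finite (neighbours E v)"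
  by (rule finite_subset[of _ V]) (auto simp: neighbours_def simple_graph_def dest: simple_graph_edgeD)

lemma degree_le_max_degree: "simple_graph V E \<Longrightarrow> v \<in> V \<Longrightarrow> degree E v \<le> max_degree V E"
  unfolding max_degree_def simple_graph_def by (intro Max_ge) auto

lemma wdeg_fun_upd_endpoint:
  fixes f :: "'a set \<Rightarrow> 'g::ab_group_add"
  assumes sg: "simple_graph V E" and ab: "{a, b} \<in> E"
  shows "wdeg E (f({a, b} := x)) a = wdeg E f a - f {a, b} + x"
proof -
  have "b \<in> neighbours E a" using ab by (simp add: neighbours_def insert_commute)
  then have split_off_b: "wdeg E g a = g {a, b} + (\<Sum>u\<in>neighbours E a - {b}. g {u, a})"
    for g :: "'a set \<Rightarrow> 'g"
    unfolding wdeg_def using sum.remove[OF finite_neighbours[OF sg], of b a "\<lambda>u. g {u, a}"]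
    by (simp add: insert_commute)
  have "a \<noteq> b" using simple_graph_edgeD[OF sg ab] by simp
  then have "(\<Sum>u\<in>neighbours E a - {b}. (f({a, b} := x)) {u, a}) =
             (\<Sum>u\<in>neighbours E a - {b}. f {u, a})"
    by (intro sum.cong) (auto simp: doubleton_eq_iff)
  then show ?thesis using split_off_b[of "f({a, b} := x)"] split_off_b[of f] by simp
qed

lemma wdeg_fun_upd_other:
  "v \<notin> {a, b} \<Longrightarrow> wdeg E (f({a, b} := x)) v = wdeg E f v"
  unfolding wdeg_def by (intro sum.cong) (auto simp: doubleton_eq_iff)

lemma wdeg_fun_upd:
  fixes f :: "'a set \<Rightarrow> 'g::ab_group_add"
  assumes "simple_graph V E" "{a, b} \<in> E"
  shows "wdeg E (f({a, b} := x)) v =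
           (if v \<in> {a, b} then wdeg E f v - f {a, b} + x else wdeg E f v)"
  using wdeg_fun_upd_endpoint[OF assms] wdeg_fun_upd_endpoint[OF assms(1), of b a] assms(2)
    wdeg_fun_upd_other[of v a b] by (auto simp: insert_commute)

lemma card_forbidden_labels:
  assumes sg: "simple_graph V E" and st: "{s, t} \<in> E" and "s \<notin> D"
  shows "finite (forbidden_labels E f D e t)" "card (forbidden_labels E f D e t) \<le> degree E t"
proof -
  define c where "c = wdeg E f t - f e"
  define W where "W = insert 0 (wdeg E f ` (neighbours E t \<inter> D))"
  have translate: "forbidden_labels E f D e t = (\<lambda>w. w - c) ` W"
    unfolding forbidden_labels_def c_def W_def
    by (auto simp: image_iff algebra_simps)
  have fin: "finite (neighbours E t)" using finite_neighbours[OF sg] .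
  have s: "s \<in> neighbours E t" using st by (simp add: neighbours_def)
  have "card (neighbours E t \<inter> D) \<le> card (neighbours E t - {s})"
    using fin \<open>s \<notin> D\<close> by (intro card_mono) auto
  also have "\<dots> < degree E t"
    using fin s card_gt_0_iff[of "neighbours E t"] by (auto simp: degree_def)
  finally have "card W \<le> degree E t"
    unfolding W_def using fin card_image_le[of "neighbours E t \<inter> D" "wdeg E f"]
    by (simp add: card_insert_if)
  moreover have "finite W" unfolding W_def using fin by simp
  ultimately show "card (forbidden_labels E f D e t) \<le> degree E t"
    unfolding translate using card_image_le[of W "\<lambda>w. w - c"] by linarith
  show "finite (forbidden_labels E f D e t)" unfolding translate using \<open>finite W\<close> by simp
qed

lemma good_on_fun_upd:
  fixes f :: "'a set \<Rightarrow> 'g::ab_group_add"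
  assumes sg: "simple_graph V E" and good: "good_on E f D" and ab: "{a, b} \<in> E"
    and "a \<notin> D" "b \<notin> D" and S: "S \<subseteq> {a, b}"
    and distinct: "{a, b} \<subseteq> S \<Longrightarrow> wdeg E f a \<noteq> wdeg E f b"
    and "x \<noteq> 0" and allowed: "\<forall>t\<in>S. x \<notin> forbidden_labels E f D {a, b} t"
  shows "good_on E (f({a, b} := x)) (D \<union> S)"
proof -
  let ?f = "f({a, b} := x)"
  have w_end: "wdeg E ?f t = wdeg E f t - f {a, b} + x" if "t \<in> S" for t
    using wdeg_fun_upd[OF sg ab, of f x t] that S by auto
  have w_old: "wdeg E ?f d = wdeg E f d" if "d \<in> D" for d
    using wdeg_fun_upd[OF sg ab, of f x d] that \<open>a \<notin> D\<close> \<open>b \<notin> D\<close> by auto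
  have new: "wdeg E ?f t \<noteq> 0" "\<And>d. d \<in> D \<Longrightarrow> {d, t} \<in> E \<Longrightarrow> wdeg E ?f t \<noteq> wdeg E f d"
    if "t \<in> S" for t
    using allowed that unfolding forbidden_labels_def w_end[OF that]
    by (auto simp: neighbours_def image_iff)
  have across: "wdeg E ?f d \<noteq> wdeg E ?f t" if "d \<in> D" "t \<in> S" "{d, t} \<in> E" for d t
    using new(2)[OF that(2,1,3)] w_old[OF that(1)] by simp
  have inside: "wdeg E ?f s \<noteq> wdeg E ?f t" if "s \<in> S" "t \<in> S" "{s, t} \<in> E" for s t
  proof -
    have "s \<noteq> t" using simple_graph_edgeD[OF sg that(3)] by simp
    then have "S = {a, b}" "{s, t} = {a, b}" using S that(1,2) by auto
    then show ?thesis
      using distinct w_end[OF that(1)] w_end[OF that(2)] by (auto simp: doubleton_eq_iff)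
  qed
  have "wdeg E ?f s \<noteq> wdeg E ?f t" if "s \<in> D \<union> S" "t \<in> D \<union> S" "{s, t} \<in> E" for s t
    using that good w_old across[of s t] across[of t s] inside[of s t]
    unfolding good_on_def by (auto simp: insert_commute)
  then show ?thesis
    using good \<open>x \<noteq> 0\<close> new(1) w_old unfolding good_on_def by auto
qed

lemma extend_along_edge:
  fixes f :: "'a set \<Rightarrow> 'g::ab_group_add"
  assumes sg: "simple_graph V E" and good: "good_on E f D" and ab: "{a, b} \<in> E"
    and "a \<notin> D" "b \<notin> D" and S: "S \<subseteq> {a, b}"
    and distinct: "{a, b} \<subseteq> S \<Longrightarrow> wdeg E f a \<noteq> wdeg E f b"
    and "finite B"
    and room: "infinite (UNIV :: 'g set) \<or>
               card B + (\<Sum>t\<in>S. degree E t) + 1 < card (UNIV :: 'g set)"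
  obtains x where "x \<notin> B" "good_on E (f({a, b} := x)) (D \<union> S)"
proof -
  let ?F = "\<lambda>t. forbidden_labels E f D {a, b} t"
  have "finite S" using S finite_subset by blast
  have other_end: "\<exists>s. {s, t} \<in> E \<and> s \<notin> D" if "t \<in> S" for t
  proof (cases "t = a")
    case True
    then show ?thesis using ab \<open>b \<notin> D\<close> by (auto simp: insert_commute)
  next
    case False
    then show ?thesis using that S ab \<open>a \<notin> D\<close> by auto
  qed
  have fin_F: "finite (?F t)" and card_F: "card (?F t) \<le> degree E t" if "t \<in> S" for t
    using card_forbidden_labels[OF sg] other_end[OF that] by blast+
  have "card (\<Union>t\<in>S. ?F t) \<le> (\<Sum>t\<in>S. card (?F t))"
    using card_UN_le[OF \<open>finite S\<close>] .
  also have "\<dots> \<le> (\<Sum>t\<in>S. degree E t)" using card_F by (rule sum_mono)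
  finally have "card (B \<union> (\<Union>t\<in>S. ?F t)) \<le> card B + (\<Sum>t\<in>S. degree E t)"
    using card_Un_le[of B "\<Union>t\<in>S. ?F t"] by linarith
  moreover have fin: "finite (B \<union> (\<Union>t\<in>S. ?F t))"
    using \<open>finite B\<close> \<open>finite S\<close> fin_F by simp
  ultimately have "card (insert 0 (B \<union> (\<Union>t\<in>S. ?F t))) \<le> card B + (\<Sum>t\<in>S. degree E t) + 1"
    by (simp add: card_insert_if)
  moreover have "finite (insert 0 (B \<union> (\<Union>t\<in>S. ?F t)))" using fin by simp
  ultimately obtain x where "x \<notin> insert 0 (B \<union> (\<Union>t\<in>S. ?F t))"
    using room ex_not_in_finite by (metis le_less_trans)
  then show ?thesis
    using that good_on_fun_upd[OF sg good ab \<open>a \<notin> D\<close> \<open>b \<notin> D\<close> S distinct] by blast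
qed

lemma extend_to_endpoint:
  fixes f :: "'a set \<Rightarrow> 'g::ab_group_add"
  assumes sg: "simple_graph V E" and good: "good_on E f D" and yv: "{y, v} \<in> E"
    and "y \<notin> D" "v \<notin> D" and "finite B"
    and room: "infinite (UNIV :: 'g set) \<or> card B + degree E v + 1 < card (UNIV :: 'g set)"
  obtains x where "x \<notin> B" "good_on E (f({y, v} := x)) (insert v D)"
proof -
  have "y \<noteq> v" using simple_graph_edgeD[OF sg yv] by simp
  obtain x where "x \<notin> B" "good_on E (f({y, v} := x)) (D \<union> {v})"
    using extend_along_edge[OF sg good yv \<open>y \<notin> D\<close> \<open>v \<notin> D\<close>, of "{v}" B] \<open>y \<noteq> v\<close> \<open>finite B\<close> room
    by auto
  then show ?thesis using that by simp
qed

lemma extend_along_ranking: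
  fixes f :: "'a set \<Rightarrow> 'g::ab_group_add" and h :: "'a \<Rightarrow> nat"
  assumes sg: "simple_graph V E" and "finite U" and "U \<inter> K = {}"
    and room: "infinite (UNIV :: 'g set) \<or> max_degree V E + 1 < card (UNIV :: 'g set)"
    and "\<forall>v\<in>U. \<exists>y\<in>U \<union> K. {y, v} \<in> E \<and> h y < h v"
    and "good_on E f D" and "D \<inter> (U \<union> K) = {}"
  shows "\<exists>f' :: 'a set \<Rightarrow> 'g. good_on E f' (D \<union> U)"
  using assms(2-)
proof (induction U arbitrary: f D rule: finite_ranking_induct[where f = h])
  case empty
  then show ?case by auto
next
  case (insert v U)
  show ?case
  proof (cases "v \<in> U")
    case True
    then have "insert v U = U" by blast
    then show ?thesis using insert.IH insert.prems by simp
  next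
    case False
    obtain y where y: "y \<in> insert v U \<union> K" "{y, v} \<in> E" "h y < h v"
      using insert.prems(3) by blast
    have "y \<notin> D" "v \<notin> D" using y(1) insert.prems(5) by auto
    have "degree E v \<le> max_degree V E"
      using degree_le_max_degree[OF sg simple_graph_edgeD(2)[OF sg y(2)]] .
    then have "infinite (UNIV :: 'g set) \<or> card {} + degree E v + 1 < card (UNIV :: 'g set)"
      using room by auto
    then obtain x where good: "good_on E (f({y, v} := x)) (insert v D)"
      using extend_to_endpoint[OF sg insert.prems(4) y(2) \<open>y \<notin> D\<close> \<open>v \<notin> D\<close> finite.emptyI] by blast
    have parent: "\<forall>w\<in>U. \<exists>y\<in>U \<union> K. {y, w} \<in> E \<and> h y < h w"
    proof
      fix w assume "w \<in> U"
      obtain y where "y \<in> insert v U \<union> K" "{y, w} \<in> E" "h y < h w"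
        using insert.prems(3) \<open>w \<in> U\<close> by blast
      moreover have "h w \<le> h v" using insert.hyps(2) \<open>w \<in> U\<close> .
      ultimately show "\<exists>y\<in>U \<union> K. {y, w} \<in> E \<and> h y < h w" by auto
    qed
    have "U \<inter> K = {}" "insert v D \<inter> (U \<union> K) = {}"
      using insert.prems(1,5) False by auto
    then obtain f' :: "'a set \<Rightarrow> 'g" where "good_on E f' (insert v D \<union> U)"
      using insert.IH[OF _ room parent good] by blast
    then show ?thesis by auto
  qed
qed

definition dist_to :: "('a \<Rightarrow> 'a \<Rightarrow> bool) \<Rightarrow> 'a set \<Rightarrow> 'a \<Rightarrow> nat" where
  "dist_to R K v = (LEAST n. \<exists>k\<in>K. (R ^^ n) v k)"

lemma dist_to_decreases:
  assumes "R\<^sup>*\<^sup>* v k" "k \<in> K" "v \<notin> K"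
  obtains y where "R v y" "dist_to R K y < dist_to R K v"
proof -
  obtain n where "(R ^^ n) v k" using rtranclp_imp_relpowp[OF assms(1)] by blast
  then have "\<exists>k\<in>K. (R ^^ dist_to R K v) v k"
    unfolding dist_to_def using assms(2) LeastI_ex[of "\<lambda>n. \<exists>k\<in>K. (R ^^ n) v k"] by blast
  then obtain k' where "k' \<in> K" and path: "(R ^^ dist_to R K v) v k'" by blast
  have "dist_to R K v \<noteq> 0"
  proof
    assume "dist_to R K v = 0"
    then show False using path \<open>k' \<in> K\<close> assms(3) by simp
  qed
  then obtain m where m: "dist_to R K v = Suc m" using not0_implies_Suc by blast
  then obtain y where "R v y" "(R ^^ m) y k'" using path relpowp_Suc_D2[of m R v k'] by auto
  then have "dist_to R K y \<le> m" unfolding dist_to_def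
    using \<open>k' \<in> K\<close> Least_le[of "\<lambda>n. \<exists>k\<in>K. (R ^^ n) y k" m] by blast
  then show ?thesis using that \<open>R v y\<close> m by simp
qed

lemma rtranclp_leaves_set:
  assumes "R\<^sup>*\<^sup>* x c" "x \<in> X" "c \<notin> X"
  shows "\<exists>q\<in>X. \<exists>z. z \<notin> X \<and> R q z"
  using assms
proof (induction rule: rtranclp_induct)
  case (step b d)
  then show ?case by (cases "b \<in> X") blast+
qed simp

lemma degree_pos: "simple_graph V E \<Longrightarrow> {v, u} \<in> E \<Longrightarrow> 0 < degree E v"
  using finite_neighbours[of V E v] card_gt_0_iff[of "neighbours E v"]
  by (auto simp: degree_def neighbours_def insert_commute)

lemma ex_degree_less_col:
  assumes sg: "simple_graph V E" and "subgraph V' E' V E" "V' \<noteq> {}"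
  shows "\<exists>v\<in>V'. degree E' v < col V E"
proof -
  let ?P = "\<lambda>k. \<forall>V' E'. subgraph V' E' V E \<and> V' \<noteq> {} \<longrightarrow> (\<exists>v\<in>V'. degree E' v < k)"
  have "?P (Suc (card V))"
  proof (intro allI impI)
    fix V1 E1 assume sub: "subgraph V1 E1 V E \<and> V1 \<noteq> {}"
    then obtain v where "v \<in> V1" by blast
    have "neighbours E1 v \<subseteq> V" using sub unfolding subgraph_def neighbours_def by blast
    then have "degree E1 v < Suc (card V)"
      using sg card_mono unfolding simple_graph_def degree_def by (metis le_imp_less_Suc)
    then show "\<exists>v\<in>V1. degree E1 v < Suc (card V)" using \<open>v \<in> V1\<close> by blast
  qed
  then have "?P (col V E)" unfolding col_def by (rule LeastI)
  then show ?thesis using assms(2,3) by blast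
qed

lemma self_in_component: "v \<in> V \<Longrightarrow> v \<in> component V E v"
  unfolding component_def by simp

lemma component_edge_closed:
  assumes sg: "simple_graph V E" and "c \<in> component V E v" "{c, d} \<in> E"
  shows "d \<in> component V E v"
  using assms simple_graph_edgeD(2)[OF sg] unfolding component_def adjacent_def
  by (auto intro: rtranclp.rtrancl_into_rtrancl)

lemma component_connected:
  assumes "a \<in> component V E v" "b \<in> component V E v"
  shows "(adjacent E)\<^sup>*\<^sup>* a b"
proof -
  have "symp (adjacent E)" unfolding symp_def adjacent_def by (simp add: insert_commute)
  then have "(adjacent E)\<^sup>*\<^sup>* a v" using assms(1) symp_rtranclp sympD unfolding component_def by fastforce
  then show ?thesis using assms(2) unfolding component_def by auto
qed

lemma not_in_edge_closed_set:
  assumes "(adjacent E)\<^sup>*\<^sup>* v c" "v \<notin> D" and closed: "\<forall>a b. {a, b} \<in> E \<longrightarrow> a \<in> D \<longrightarrow> b \<in> D"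
  shows "c \<notin> D"
  using assms(1,2)
proof (induction rule: rtranclp_induct)
  case (step b d)
  then show ?case using closed unfolding adjacent_def by (metis insert_commute)
qed

lemma component_anchor:
  assumes sg: "simple_graph V E" and "v \<in> V" and big: "3 \<le> card (component V E v)"
  obtains r u q z where "r \<in> component V E v" "degree E r < col V E" "{r, u} \<in> E"
    "q \<in> {r, u}" "z \<notin> {r, u}" "{q, z} \<in> E"
proof -
  let ?C = "component V E v"
  have "?C \<subseteq> V" unfolding component_def by auto
  have fin: "finite ?C" using finite_subset[OF \<open>?C \<subseteq> V\<close>] sg by (simp add: simple_graph_def)
  have "subgraph ?C {e\<in>E. e \<subseteq> ?C} V E" using \<open>?C \<subseteq> V\<close> by (auto simp: subgraph_def)
  then obtain r where r: "r \<in> ?C" "degree {e\<in>E. e \<subseteq> ?C} r < col V E"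
    using ex_degree_less_col[OF sg] self_in_component[OF \<open>v \<in> V\<close>] by blast
  have "neighbours {e\<in>E. e \<subseteq> ?C} r = neighbours E r"
    using component_edge_closed[OF sg r(1)] r(1) by (auto simp: neighbours_def insert_commute)
  then have "degree E r < col V E" using r(2) by (simp add: degree_def)
  have leave: "\<exists>q\<in>X. \<exists>z. z \<notin> X \<and> {q, z} \<in> E" if rX: "r \<in> X" and "finite X" and small: "card X < 3" for X
  proof -
    have "\<not> ?C \<subseteq> X" using card_mono[OF \<open>finite X\<close>, of ?C] big small by linarith
    then obtain c where "c \<in> ?C" "c \<notin> X" by blast
    then show ?thesis using rtranclp_leaves_set[OF component_connected[OF r(1)] rX]
      by (simp add: adjacent_def)
  qed
  obtain u where ru: "{r, u} \<in> E" using leave[of "{r}"] by auto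
  have "card {r, u} < 3" by (simp add: card_insert_if)
  then obtain q z where "q \<in> {r, u}" "z \<notin> {r, u}" "{q, z} \<in> E"
    using leave[of "{r, u}"] by auto
  with ru show ?thesis using that r(1) \<open>degree E r < col V E\<close> by blast
qed

lemma extend_to_anchor:
  fixes f :: "'a set \<Rightarrow> 'g::ab_group_add"
  assumes sg: "simple_graph V E" and good: "good_on E f D"
    and ru: "{r, u} \<in> E" and qz: "{q, z} \<in> E" and q: "q \<in> {r, u}" and z: "z \<notin> {r, u}"
    and "r \<notin> D" "u \<notin> D" "z \<notin> D"
    and room_z: "infinite (UNIV :: 'g set) \<or> degree E z + 2 < card (UNIV :: 'g set)"
    and room_ru: "infinite (UNIV :: 'g set) \<or> degree E r + degree E u + 1 < card (UNIV :: 'g set)"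
  shows "\<exists>f' :: 'a set \<Rightarrow> 'g. good_on E f' (D \<union> {r, u, z})"
proof -
  obtain p where p: "{p, q} = {r, u}" using q by (auto simp: insert_commute)
  have "q \<notin> D" "p \<noteq> q" "p \<notin> {q, z}"
    using q z p simple_graph_edgeD(3)[OF sg ru] \<open>r \<notin> D\<close> \<open>u \<notin> D\<close> by (auto simp: doubleton_eq_iff)
  txt \<open>Relabelling \<open>ru\<close> later shifts the weights of \<open>r\<close> and \<open>u\<close> equally, so they must be made
    distinct now: \<open>bad\<close> is the one label of \<open>qz\<close> that would give \<open>q\<close> the weight of \<open>p\<close>.\<close>
  define bad where "bad = wdeg E f p - (wdeg E f q - f {q, z})"
  obtain x where "x \<notin> {bad}" and good_z: "good_on E (f({q, z} := x)) (insert z D)"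
    using extend_to_endpoint[OF sg good qz \<open>q \<notin> D\<close> \<open>z \<notin> D\<close>, of "{bad}"] room_z by auto
  let ?f = "f({q, z} := x)"
  have "wdeg E ?f q \<noteq> wdeg E ?f p"
    using \<open>x \<notin> {bad}\<close> \<open>p \<notin> {q, z}\<close> wdeg_fun_upd[OF sg qz, of f x] unfolding bad_def
    by (auto simp: algebra_simps)
  then have "{r, u} \<subseteq> {r, u} \<Longrightarrow> wdeg E ?f r \<noteq> wdeg E ?f u"
    using p by (auto simp: doubleton_eq_iff)
  then obtain y where "good_on E (?f({r, u} := y)) (insert z D \<union> {r, u})"
    using extend_along_edge[OF sg good_z ru _ _ subset_refl, of "{}"] \<open>r \<notin> D\<close> \<open>u \<notin> D\<close> z room_ru
      simple_graph_edgeD(3)[OF sg ru]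
    by auto
  moreover have "insert z D \<union> {r, u} = D \<union> {r, u, z}" by blast
  ultimately show ?thesis by auto
qed

lemma extend_to_component:
  fixes f :: "'a set \<Rightarrow> 'g::ab_group_add"
  assumes sg: "simple_graph V E"
    and room: "infinite (UNIV :: 'g set) \<or> max_degree V E + col V E + 1 \<le> card (UNIV :: 'g set)"
    and "v \<in> V" "3 \<le> card (component V E v)"
    and good: "good_on E f D" and disj: "D \<inter> component V E v = {}"
  shows "\<exists>f' :: 'a set \<Rightarrow> 'g. good_on E f' (D \<union> component V E v)"
proof -
  let ?C = "component V E v"
  obtain r u q z where r: "r \<in> ?C" "degree E r < col V E" and ru: "{r, u} \<in> E"
    and qz: "q \<in> {r, u}" "z \<notin> {r, u}" "{q, z} \<in> E"
    using component_anchor[OF sg \<open>v \<in> V\<close> \<open>3 \<le> card ?C\<close>] by blast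
  define K where "K = {r, u, z}"
  have "u \<in> ?C" using component_edge_closed[OF sg r(1) ru] .
  then have "K \<subseteq> ?C" using component_edge_closed[OF sg _ qz(3)] qz(1) r(1) by (auto simp: K_def)
  have "finite ?C"
    using sg finite_subset[of ?C V] by (auto simp: simple_graph_def component_def)
  let ?h = "dist_to (adjacent E) K"
  have parent: "\<forall>w\<in>?C - K. \<exists>y\<in>(?C - K) \<union> K. {y, w} \<in> E \<and> ?h y < ?h w"
  proof
    fix w assume w: "w \<in> ?C - K"
    obtain y where "adjacent E w y" "?h y < ?h w"
      using dist_to_decreases[OF component_connected[OF _ r(1)], of w K] w by (auto simp: K_def)
    moreover have "y \<in> ?C" using calculation(1) component_edge_closed[OF sg] w by (auto simp: adjacent_def)
    ultimately show "\<exists>y\<in>(?C - K) \<union> K. {y, w} \<in> E \<and> ?h y < ?h w"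
      by (auto simp: adjacent_def insert_commute)
  qed
  have "0 < degree E r" using degree_pos[OF sg ru] .
  then have room_one: "infinite (UNIV :: 'g set) \<or> max_degree V E + 1 < card (UNIV :: 'g set)"
    using room r(2) by auto
  have "finite (?C - K)" "(?C - K) \<inter> K = {}" "D \<inter> ((?C - K) \<union> K) = {}"
    using \<open>finite ?C\<close> disj \<open>K \<subseteq> ?C\<close> by auto
  then obtain f1 :: "'a set \<Rightarrow> 'g" where good1: "good_on E f1 (D \<union> (?C - K))"
    using extend_along_ranking[OF sg _ _ room_one parent good] by blast
  have "z \<in> V" "u \<in> V" using simple_graph_edgeD[OF sg] ru qz(3) by blast+
  then have "degree E z \<le> max_degree V E" "degree E u \<le> max_degree V E"
    using degree_le_max_degree[OF sg] by auto
  then have "infinite (UNIV :: 'g set) \<or> degree E z + 2 < card (UNIV :: 'g set)"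
    "infinite (UNIV :: 'g set) \<or> degree E r + degree E u + 1 < card (UNIV :: 'g set)"
    using room r(2) \<open>0 < degree E r\<close> by auto
  moreover have "r \<notin> D \<union> (?C - K)" "u \<notin> D \<union> (?C - K)" "z \<notin> D \<union> (?C - K)"
    using disj \<open>K \<subseteq> ?C\<close> by (auto simp: K_def)
  ultimately obtain f2 :: "'a set \<Rightarrow> 'g" where "good_on E f2 (D \<union> (?C - K) \<union> K)"
    using extend_to_anchor[OF sg good1 ru qz(3) qz(1,2)] unfolding K_def by blast
  moreover have "D \<union> (?C - K) \<union> K = D \<union> ?C" using \<open>K \<subseteq> ?C\<close> by blast
  ultimately show ?thesis by auto
qed

lemma extend_to_all_components:
  fixes f :: "'a set \<Rightarrow> 'g::ab_group_add"
  assumes sg: "simple_graph V E" and big: "\<forall>v\<in>V. card (component V E v) \<ge> 3"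
    and room: "infinite (UNIV :: 'g set) \<or> max_degree V E + col V E + 1 \<le> card (UNIV :: 'g set)"
    and "D \<subseteq> V" and "\<forall>a b. {a, b} \<in> E \<longrightarrow> a \<in> D \<longrightarrow> b \<in> D" and "good_on E f D"
  shows "\<exists>f' :: 'a set \<Rightarrow> 'g. good_on E f' V"
  using assms(4-)
proof (induction "card (V - D)" arbitrary: D f rule: less_induct)
  case less
  show ?case
  proof (cases "V \<subseteq> D")
    case True
    then show ?thesis using less.prems(1,3) by (metis subset_antisym)
  next
    case False
    then obtain v where "v \<in> V" "v \<notin> D" by blast
    let ?C = "component V E v"
    have "D \<inter> ?C = {}"
      using not_in_edge_closed_set[OF _ \<open>v \<notin> D\<close> less.prems(2)] by (auto simp: component_def)
    then obtain f1 :: "'a set \<Rightarrow> 'g" where "good_on E f1 (D \<union> ?C)"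
      using extend_to_component[OF sg room \<open>v \<in> V\<close> _ less.prems(3)] big \<open>v \<in> V\<close> by blast
    moreover have "D \<union> ?C \<subseteq> V" using less.prems(1) by (auto simp: component_def)
    moreover have "\<forall>a b. {a, b} \<in> E \<longrightarrow> a \<in> D \<union> ?C \<longrightarrow> b \<in> D \<union> ?C"
      using less.prems(2) component_edge_closed[OF sg] by blast
    moreover have "card (V - (D \<union> ?C)) < card (V - D)"
      using sg \<open>v \<in> V\<close> \<open>v \<notin> D\<close> self_in_component[of v V E]
      by (intro psubset_card_mono) (auto simp: simple_graph_def)
    ultimately show ?thesis using less.hyps by blast
  qed
qed

theorem mainTheorem6:
  fixes V :: "'a set" and E :: "'a set set"
  assumes "simple_graph V E"
    and "\<forall>v\<in>V. card (component V E v) \<ge> 3"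
    and "infinite (UNIV :: 'g::ab_group_add set) \<or>
         max_degree V E + col V E + 1 \<le> card (UNIV :: 'g set)"
  shows "\<exists>f :: 'a set \<Rightarrow> 'g. (\<forall>e\<in>E. f e \<noteq> 0) \<and> (\<forall>v\<in>V. wdeg E f v \<noteq> 0) \<and>
           (\<forall>u v. {u, v} \<in> E \<longrightarrow> wdeg E f u \<noteq> wdeg E f v)"
proof (cases "V = {}")
  case True
  then have "E = {}" using assms(1) by (auto simp: simple_graph_def)
  then show ?thesis using True by simp
next
  case False
  have "subgraph V {} V E" by (simp add: subgraph_def)
  then have "0 < col V E" using ex_degree_less_col[OF assms(1) _ False] by fastforce
  then obtain x :: 'g where "x \<notin> {0}"
    using assms(3) ex_not_in_finite[of "{0 :: 'g}"] by fastforce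
  then have "good_on E (\<lambda>_. x) {}" by (simp add: good_on_def)
  then obtain f :: "'a set \<Rightarrow> 'g" where "good_on E f V"
    using extend_to_all_components[OF assms, of "{}"] by blast
  then show ?thesis using simple_graph_edgeD[OF assms(1)] unfolding good_on_def by blast
qed

end
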